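(* Let $R$ be an associative ring with identity and $a,b,c,d\in R$ such that both $a^{\|(b,c)}$ and $d^{\|(b,c)}$ exist. Let $b^{-}$, $c^{-}$ be any (fixed) inner inverses of $b$, $c$, and put $e=bb^{-}$, $f=c^{-}c$. Then $a^{\|(b,c)}de+1-e$ and $fda^{\|(b,c)}+1-f$ are invertible and $(a^{\|(b,c)}de+1-e)^{-1}=d^{\|(b,c)}ae+1-e$ and $(fda^{\|(b,c)}+1-f)^{-1}=fad^{\|(b,c)}+1-f$.
   Context: For $a,b,c\in R$, $a$ is $(b,c)$-invertible if there exists $y\in R$ with $y\in (bRy)\cap(yRc)$, $yab=b$ and $cay=c$; such $y$ is unique and denoted $a^{\|(b,c)}$. An inner inverse of $x$ is an element $x^{-}$ with $xx^{-}x=x$. *)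

theory Defs
  imports Main
begin

definition bc_inverse :: "'a::ring_1 \<Rightarrow> 'a \<Rightarrow> 'a \<Rightarrow> 'a \<Rightarrow> bool" where
  "bc_inverse a b c y \<longleftrightarrow>
     (\<exists>r. y = b * r * y) \<and> (\<exists>s. y = y * s * c) \<and> y * a * b = b \<and> c * a * y = c"

definition bc_invertible :: "'a::ring_1 \<Rightarrow> 'a \<Rightarrow> 'a \<Rightarrow> bool" where
  "bc_invertible a b c \<longleftrightarrow> (\<exists>y. bc_inverse a b c y)"

text \<open>The (b,c)-inverse a^{||(b,c)} (unique when it exists).\<close>
definition bc_inv :: "'a::ring_1 \<Rightarrow> 'a \<Rightarrow> 'a \<Rightarrow> 'a" where
  "bc_inv a b c = (THE y. bc_inverse a b c y)"

definition ring_invertible :: "'a::ring_1 \<Rightarrow> bool" where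
  "ring_invertible x \<longleftrightarrow> (\<exists>z. x * z = 1 \<and> z * x = 1)"

definition ring_inverse :: "'a::ring_1 \<Rightarrow> 'a" where
  "ring_inverse x = (THE z. x * z = 1 \<and> z * x = 1)"

end

theory Submission
  imports Defs
begin

text \<open>Let y and z be the (b,c)-inverses of a and d. They absorb each other through the
opposite element: y d z = y and z a y = z, and dually z d y = y and y a z = z. Since
e = bb' fixes y and z on the left, y a e = e and z d e = e, and dually for f = c'c on the
right; these identities make the products of the two perturbed idempotent expressions
collapse to 1.\<close>

lemma bc_inverse_unique:
  fixes a b c y z :: "'a::ring_1"
  assumes "bc_inverse a b c y" and "bc_inverse a b c z"
  shows "y = z"
proof -
  obtain r where r: "y = b * r * y" using assms(1) unfolding bc_inverse_def by blast
  obtain s where s: "z = z * s * c" using assms(2) unfolding bc_inverse_def by blast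
  have zab: "z * a * b = b" and cay: "c * a * y = c"
    using assms unfolding bc_inverse_def by auto
  have "y = z * a * b * r * y" using r zab by (simp add: mult.assoc)
  also have "\<dots> = z * a * y" using r by (simp add: mult.assoc)
  also have "\<dots> = z * s * (c * a * y)" using s by (metis mult.assoc)
  also have "\<dots> = z" using s cay by simp
  finally show ?thesis .
qed

lemma bc_inverse_bc_inv:
  assumes "bc_invertible a b c"
  shows "bc_inverse a b c (bc_inv a b c)"
proof -
  obtain y where "bc_inverse a b c y" using assms unfolding bc_invertible_def by blast
  then show ?thesis unfolding bc_inv_def by (metis theI bc_inverse_unique)
qed

lemma bc_inverse_absorb:
  fixes a b c d y z :: "'a::ring_1"
  assumes "bc_inverse a b c y" and "bc_inverse d b c z"
  shows "y * d * z = y" and "z * d * y = y"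
proof -
  obtain r s where "y = b * r * y" "y = y * s * c"
    using assms(1) unfolding bc_inverse_def by blast
  moreover have "c * d * z = c" "z * d * b = b"
    using assms(2) unfolding bc_inverse_def by auto
  ultimately show "y * d * z = y" "z * d * y = y" by (metis mult.assoc)+
qed

lemma bc_inverse_inner_inverse_left:
  fixes a b c y b' :: "'a::ring_1"
  assumes "bc_inverse a b c y" and "b * b' * b = b"
  shows "b * b' * y = y"
proof -
  obtain r where "y = b * r * y" using assms(1) unfolding bc_inverse_def by blast
  with assms(2) show ?thesis by (metis mult.assoc)
qed

lemma bc_inverse_inner_inverse_right:
  fixes a b c y c' :: "'a::ring_1"
  assumes "bc_inverse a b c y" and "c * c' * c = c"
  shows "y * (c' * c) = y"
proof -
  obtain s where "y = y * s * c" using assms(1) unfolding bc_inverse_def by blast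
  with assms(2) show ?thesis by (metis mult.assoc)
qed

lemma idempotent_perturb_right_mult_eq_1:
  fixes e u v :: "'a::ring_1"
  assumes "e * e = e" and "e * v = v" and "u * v * e = e"
  shows "(u * e + 1 - e) * (v * e + 1 - e) = 1"
proof -
  have "(u * e + 1 - e) * (v * e + 1 - e)
      = u * (e * v) * e + u * (e - e * e) + (v * e - (e * v) * e) + (1 - e - e + e * e)"
    by (simp add: algebra_simps)
  also have "\<dots> = 1" using assms by (simp add: mult.assoc)
  finally show ?thesis .
qed

lemma idempotent_perturb_left_mult_eq_1:
  fixes f u v :: "'a::ring_1"
  assumes "f * f = f" and "u * f = u" and "f * u * v = f"
  shows "(f * u + 1 - f) * (f * v + 1 - f) = 1"
proof -
  have "(f * u + 1 - f) * (f * v + 1 - f)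
      = f * (u * f) * v + f * (u - u * f) + (f * v - (f * f) * v) + (1 - f - f + f * f)"
    by (simp add: algebra_simps)
  also have "\<dots> = 1" using assms by (simp add: mult.assoc)
  finally show ?thesis .
qed

lemma ring_inverse_eqI:
  fixes x z :: "'a::ring_1"
  assumes "x * z = 1" and "z * x = 1"
  shows "ring_invertible x \<and> ring_inverse x = z"
proof -
  have "w = z" if "x * w = 1 \<and> w * x = 1" for w
  proof -
    have "w = (z * x) * w" using assms(2) by simp
    also have "\<dots> = z" using that by (simp add: mult.assoc)
    finally show ?thesis .
  qed
  then show ?thesis unfolding ring_invertible_def ring_inverse_def
    using assms by (metis (mono_tags, lifting) the_equality)
qed

theorem mainTheorem10:
  fixes a b c d b' c' :: "'a::ring_1"
  assumes "bc_invertible a b c" and "bc_invertible d b c"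
    and "b * b' * b = b" and "c * c' * c = c"
  defines "e \<equiv> b * b'" and "f \<equiv> c' * c"
  shows "ring_invertible (bc_inv a b c * d * e + 1 - e)
       \<and> ring_invertible (f * d * bc_inv a b c + 1 - f)
       \<and> ring_inverse (bc_inv a b c * d * e + 1 - e) = bc_inv d b c * a * e + 1 - e
       \<and> ring_inverse (f * d * bc_inv a b c + 1 - f) = f * a * bc_inv d b c + 1 - f"
proof -
  define y z where "y = bc_inv a b c" and "z = bc_inv d b c"
  have Y: "bc_inverse a b c y" and Z: "bc_inverse d b c z"
    using bc_inverse_bc_inv assms(1,2) unfolding y_def z_def by blast+
  have ee: "e * e = e" and ff: "f * f = f"
    using assms(3,4) unfolding e_def f_def by (metis mult.assoc)+
  have "e * y = y" "e * z = z" "y * f = y" "z * f = z"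
    using bc_inverse_inner_inverse_left[OF _ assms(3)] bc_inverse_inner_inverse_right[OF _ assms(4)]
      Y Z unfolding e_def f_def by blast+
  then have "e * (z * a) = z * a" "e * (y * d) = y * d" "d * y * f = d * y" "a * z * f = a * z"
    by (simp_all flip: mult.assoc) (simp_all add: mult.assoc)
  moreover have "y * d * (z * a) * e = e" "z * a * (y * d) * e = e"
    "f * (d * y) * (a * z) = f" "f * (a * z) * (d * y) = f"
  proof -
    have "y * a * e = e" "z * d * e = e" "f * a * y = f" "f * d * z = f"
      using Y Z unfolding e_def f_def bc_inverse_def by (metis mult.assoc)+
    moreover note bc_inverse_absorb[OF Y Z] bc_inverse_absorb[OF Z Y]
    ultimately show "y * d * (z * a) * e = e" "z * a * (y * d) * e = e"
      "f * (d * y) * (a * z) = f" "f * (a * z) * (d * y) = f"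
      by (simp_all flip: mult.assoc) (simp_all add: mult.assoc)
  qed
  ultimately have inverse_e: "(y * d * e + 1 - e) * (z * a * e + 1 - e) = 1"
    "(z * a * e + 1 - e) * (y * d * e + 1 - e) = 1"
    and inverse_f: "(f * (d * y) + 1 - f) * (f * (a * z) + 1 - f) = 1"
    "(f * (a * z) + 1 - f) * (f * (d * y) + 1 - f) = 1"
    using ee ff idempotent_perturb_right_mult_eq_1 idempotent_perturb_left_mult_eq_1 by blast+
  then show ?thesis using ring_inverse_eqI[OF inverse_e] ring_inverse_eqI[OF inverse_f]
    unfolding y_def z_def by (simp add: mult.assoc)
qed

end
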